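(* In the parallel-links routing game with homogeneous costs described in the context, suppose either $N=2$ or all $N$ users have equal demands $r^i=R/N$. Let $\alpha^i>0$ with $\sum_i\alpha^i=1$, and let $PoS$ be the ratio of the weighted social cost of the NBS, $\sum_i\alpha^i\tilde g^i$, to the minimum over feasible profiles of the weighted social cost $J^\alpha_{sys}(\mathbf f)=\sum_i\alpha^i\sum_lf^i_lT_l(f_l)$. Then $PoS\le\max_i\alpha^i/\min_i\alpha^i$.
   Context: Parallel-links routing game: users $\mathcal N=\{1,\dots,N\}$ share parallel links $\mathcal L=\{1,\dots,L\}$ from a common source to a common destination; link $l$ has capacity $c_l$. User $i$ has demand $r^i>0$, $R=\sum_ir^i<\sum_lc_l$. A routing strategy of user $i$ is $\mathbf f^i=(f^i_l)_l$ with $f^i_l\ge0$, $\sum_lf^i_l=r^i$; feasible profiles form $\mathbf F$; $f_l=\sum_if^i_l$. Homogeneous costs: $J^i(\mathbf f)=\sum_lf^i_lT_l(f_l)$, each $T_l:[0,\infty)\to[0,\infty)$ strictly increasing, convex, continuously differentiable, with $T_l(f_l)=T(c_l-f_l)$ for $f_l<c_l$ and $T_l(f_l)=\infty$ for $f_l\ge c_l$, for a single link-independent function $T$ with $T(c_l-f_l)$ strictly increasing in $f_l$. NEP: the unique feasible $\hat{\mathbf f}$ in which each user's strategy minimizes its cost given the others'; $\hat J^i=J^i(\hat{\mathbf f})$. Bargaining: $\mathcal G$ is the set of all vectors $\sum_{m=1}^Mp_m(J^1(\mathbf f(m)),\dots,J^N(\mathbf f(m)))$ with $M$ finite, $p_m>0$,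 $\sum p_m=1$, $\mathbf f(m)\in\mathbf F$; the NBS is the unique $\tilde{\mathbf g}$ maximizing $\prod_i(\hat J^i-g^i)$ over $\mathbf g\in\mathcal G$ with $g^i\le\hat J^i$ for all $i$. *)

theory Defs
  imports "HOL-Analysis.Analysis" "HOL-Library.Extended_Real"
begin

(* Users are indexed by i < N, links by l < L (0-based).
   A profile is f :: nat => nat => real, f i l = flow of user i on link l.
   Costs take values in ereal (infinite when a link is at or above capacity). *)

definition link_flow :: "nat \<Rightarrow> (nat \<Rightarrow> nat \<Rightarrow> real) \<Rightarrow> nat \<Rightarrow> real" where
  "link_flow N f l = (\<Sum>i<N. f i l)"

definition link_cost :: "(real \<Rightarrow> real) \<Rightarrow> real \<Rightarrow> real \<Rightarrow> ereal" where
  "link_cost T cl x = (if x < cl then ereal (T (cl - x)) else \<infinity>)"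

definition user_strategy :: "nat \<Rightarrow> real \<Rightarrow> (nat \<Rightarrow> real) \<Rightarrow> bool" where
  "user_strategy L ri g \<longleftrightarrow> (\<forall>l<L. 0 \<le> g l) \<and> (\<Sum>l<L. g l) = ri"

definition feasible :: "nat \<Rightarrow> nat \<Rightarrow> (nat \<Rightarrow> real) \<Rightarrow> (nat \<Rightarrow> nat \<Rightarrow> real) set" where
  "feasible N L r = {f. \<forall>i<N. user_strategy L (r i) (f i)}"

definition user_cost ::
  "nat \<Rightarrow> nat \<Rightarrow> (real \<Rightarrow> real) \<Rightarrow> (nat \<Rightarrow> real) \<Rightarrow> nat \<Rightarrow> (nat \<Rightarrow> nat \<Rightarrow> real) \<Rightarrow> ereal" where
  "user_cost N L T c i f = (\<Sum>l<L. ereal (f i l) * link_cost T (c l) (link_flow N f l))"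

definition sys_cost ::
  "nat \<Rightarrow> nat \<Rightarrow> (real \<Rightarrow> real) \<Rightarrow> (nat \<Rightarrow> real) \<Rightarrow> (nat \<Rightarrow> real) \<Rightarrow> (nat \<Rightarrow> nat \<Rightarrow> real) \<Rightarrow> ereal" where
  "sys_cost N L T c \<alpha> f = (\<Sum>i<N. ereal (\<alpha> i) * user_cost N L T c i f)"

definition is_NEP ::
  "nat \<Rightarrow> nat \<Rightarrow> (real \<Rightarrow> real) \<Rightarrow> (nat \<Rightarrow> real) \<Rightarrow> (nat \<Rightarrow> real) \<Rightarrow> (nat \<Rightarrow> nat \<Rightarrow> real) \<Rightarrow> bool" where
  "is_NEP N L T c r f \<longleftrightarrow> f \<in> feasible N L r \<and>
     (\<forall>i<N. \<forall>g. user_strategy L (r i) g \<longrightarrow>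
        user_cost N L T c i f \<le> user_cost N L T c i (f(i := g)))"

definition bargain_set ::
  "nat \<Rightarrow> nat \<Rightarrow> (real \<Rightarrow> real) \<Rightarrow> (nat \<Rightarrow> real) \<Rightarrow> (nat \<Rightarrow> real) \<Rightarrow> (nat \<Rightarrow> ereal) set" where
  "bargain_set N L T c r = {g. \<exists>(M::nat) (p::nat \<Rightarrow> real) (fs::nat \<Rightarrow> nat \<Rightarrow> nat \<Rightarrow> real).
      (\<forall>m<M. 0 < p m) \<and> (\<Sum>m<M. p m) = 1 \<and> (\<forall>m<M. fs m \<in> feasible N L r) \<and>
      (\<forall>i<N. g i = (\<Sum>m<M. ereal (p m) * user_cost N L T c i (fs m)))}"

definition is_NBS ::
  "nat \<Rightarrow> nat \<Rightarrow> (real \<Rightarrow> real) \<Rightarrow> (nat \<Rightarrow> real) \<Rightarrow> (nat \<Rightarrow> real) \<Rightarrow> (nat \<Rightarrow> ereal) \<Rightarrow> (nat \<Rightarrow> ereal) \<Rightarrow> bool" where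
  "is_NBS N L T c r Jhat gt \<longleftrightarrow> gt \<in> bargain_set N L T c r \<and> (\<forall>i<N. gt i \<le> Jhat i) \<and>
     (\<forall>g \<in> bargain_set N L T c r. (\<forall>i<N. g i \<le> Jhat i) \<longrightarrow>
        (\<Prod>i<N. Jhat i - g i) \<le> (\<Prod>i<N. Jhat i - gt i))"

definition PoS ::
  "nat \<Rightarrow> nat \<Rightarrow> (real \<Rightarrow> real) \<Rightarrow> (nat \<Rightarrow> real) \<Rightarrow> (nat \<Rightarrow> real) \<Rightarrow> (nat \<Rightarrow> real) \<Rightarrow> (nat \<Rightarrow> ereal) \<Rightarrow> ereal" where
  "PoS N L T c r \<alpha> gt = (\<Sum>i<N. ereal (\<alpha> i) * gt i) / (INF f\<in>feasible N L r. sys_cost N L T c \<alpha> f)"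

definition C1_on :: "real set \<Rightarrow> (real \<Rightarrow> real) \<Rightarrow> bool" where
  "C1_on S h \<longleftrightarrow> (\<exists>D. (\<forall>x\<in>S. (h has_real_derivative D x) (at x within S)) \<and> continuous_on S D)"

end

theory Submission
  imports Defs
begin

text \<open>The Nash bargaining solution minimises the unweighted social cost: \<open>\<Sum>\<^sub>i g\<^sup>i\<close> is at most
  \<open>\<Sum>\<^sub>i J\<^sup>i(f)\<close> for every feasible \<open>f\<close>. If \<open>f\<close> keeps all links below capacity, each user can
  deviate from the equilibrium to a strategy under which no link carries more than in \<open>f\<close>, which
  bounds its equilibrium cost. From profiles with the same link flows as \<open>f\<close> one then builds a
  point of the bargaining set whose total cost is that of \<open>f\<close> and which improves on the
  equilibrium by the same amount for every user: for two users as a mixture of two such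
  profiles, for equal demands by splitting the flows of \<open>f\<close> evenly, using that equal demands
  force equal equilibrium costs (first-order conditions). By AM-GM, a point of smaller total
  cost than this one would have a smaller Nash product. Passing to the \<open>\<alpha>\<close>-weighted costs loses
  at most the factor \<open>max \<alpha> / min \<alpha>\<close>.\<close>

lemma feasible_nonneg: "f \<in> feasible N L r \<Longrightarrow> i < N \<Longrightarrow> l < L \<Longrightarrow> 0 \<le> f i l"
  by (auto simp: feasible_def user_strategy_def)

lemma feasible_sum: "f \<in> feasible N L r \<Longrightarrow> i < N \<Longrightarrow> (\<Sum>l<L. f i l) = r i"
  by (auto simp: feasible_def user_strategy_def)

lemma link_flow_nonneg: "f \<in> feasible N L r \<Longrightarrow> l < L \<Longrightarrow> 0 \<le> link_flow N f l"
  unfolding link_flow_def by (auto intro!: sum_nonneg feasible_nonneg)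

lemma sum_le_link_flow:
  assumes "f \<in> feasible N L r" "I \<subseteq> {..<N}" "l < L"
  shows "(\<Sum>i\<in>I. f i l) \<le> link_flow N f l"
  unfolding link_flow_def using assms by (intro sum_mono2) (auto intro: feasible_nonneg)

lemma sum_link_flow:
  assumes "f \<in> feasible N L r"
  shows "(\<Sum>l<L. link_flow N f l) = (\<Sum>i<N. r i)"
proof -
  have "(\<Sum>l<L. link_flow N f l) = (\<Sum>i<N. \<Sum>l<L. f i l)"
    unfolding link_flow_def by (rule sum.swap)
  also have "\<dots> = (\<Sum>i<N. r i)"
    using assms by (intro sum.cong) (auto simp: feasible_sum)
  finally show ?thesis .
qed

lemma link_flow_fun_upd:
  assumes "i < N"
  shows "link_flow N (f(i := z)) l = link_flow N f l - f i l + z l"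
proof -
  have "(\<Sum>j\<in>{..<N} - {i}. (f(i := z)) j l) = (\<Sum>j\<in>{..<N} - {i}. f j l)"
    by (rule sum.cong) auto
  then show ?thesis
    using assms unfolding link_flow_def by (simp add: sum.remove[of "{..<N}" i])
qed

lemma user_strategy_segment:
  assumes "user_strategy L \<rho> x" "user_strategy L \<rho> y" "t \<in> {0..1}"
  shows "user_strategy L \<rho> (\<lambda>l. x l + t * (y l - x l))"
proof -
  have "0 \<le> x l + t * (y l - x l)" if "l < L" for l
  proof -
    have "x l + t * (y l - x l) = (1 - t) * x l + t * y l" by (simp add: algebra_simps)
    then show ?thesis using assms that by (simp add: user_strategy_def)
  qed
  moreover have "(\<Sum>l<L. x l + t * (y l - x l)) = \<rho>"
    using assms by (simp add: user_strategy_def sum.distrib sum_subtractf sum_distrib_left[symmetric])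
  ultimately show ?thesis by (simp add: user_strategy_def)
qed

lemma link_cost_term_nonneg:
  assumes "0 \<le> x" "0 \<le> y" "\<forall>v\<in>{0..<cl}. 0 \<le> T (cl - v)"
  shows "0 \<le> ereal x * link_cost T cl y"
  using assms by (auto simp: link_cost_def)

lemma user_cost_nonneg:
  assumes "f \<in> feasible N L r" "i < N"
    and T_nonneg: "\<forall>l<L. \<forall>v\<in>{0..<c l}. 0 \<le> T (c l - v)"
  shows "0 \<le> user_cost N L T c i f"
  unfolding user_cost_def
proof (rule sum_nonneg)
  fix l assume "l \<in> {..<L}"
  with assms show "0 \<le> ereal (f i l) * link_cost T (c l) (link_flow N f l)"
    by (intro link_cost_term_nonneg) (auto intro: feasible_nonneg link_flow_nonneg)
qed

lemma user_cost_below_capacity: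
  assumes "\<forall>l<L. 0 \<le> f i l" and "\<forall>l<L. 0 < f i l \<longrightarrow> link_flow N f l < c l"
  shows "user_cost N L T c i f = ereal (\<Sum>l<L. f i l * T (c l - link_flow N f l))"
  unfolding user_cost_def sum_ereal[symmetric]
proof (rule sum.cong)
  fix l assume "l \<in> {..<L}"
  with assms show "ereal (f i l) * link_cost T (c l) (link_flow N f l)
      = ereal (f i l * T (c l - link_flow N f l))"
    by (cases "f i l = 0") (auto simp: link_cost_def zero_ereal_def[symmetric] less_le)
qed simp

lemma user_cost_at_link_flows:
  assumes "f \<in> feasible N L r" "i < N" "\<forall>l<L. link_flow N f l = G l" "\<forall>l<L. G l < c l"
  shows "user_cost N L T c i f = ereal (\<Sum>l<L. f i l * T (c l - G l))"
  using assms user_cost_below_capacity[of L f i N c T] by (simp add: feasible_nonneg)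

lemma user_cost_infinite:
  assumes f: "f \<in> feasible N L r" and i: "i < N" and l: "l < L"
    and T_nonneg: "\<forall>l<L. \<forall>v\<in>{0..<c l}. 0 \<le> T (c l - v)"
    and pos: "0 < f i l" and over: "c l \<le> link_flow N f l"
  shows "user_cost N L T c i f = \<infinity>"
proof -
  have "\<infinity> = ereal (f i l) * link_cost T (c l) (link_flow N f l)"
    using pos over by (simp add: link_cost_def)
  also have "\<dots> \<le> user_cost N L T c i f"
    unfolding user_cost_def using f i l T_nonneg
    by (intro sum_mono2[of "{..<L}" "{l}", simplified] link_cost_term_nonneg)
      (auto intro: feasible_nonneg link_flow_nonneg)
  finally show ?thesis by simp
qed

lemma user_cost_le_at_larger_flows:
  assumes T_incr: "\<forall>l<L. strict_mono_on {0..<c l} (\<lambda>x. T (c l - x))"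
    and nonneg: "\<forall>l<L. 0 \<le> f i l"
    and flows: "\<forall>l<L. 0 < f i l \<longrightarrow> 0 \<le> link_flow N f l \<and> link_flow N f l \<le> G l"
    and below: "\<forall>l<L. G l < c l"
  shows "user_cost N L T c i f \<le> ereal (\<Sum>l<L. f i l * T (c l - G l))"
proof -
  have flows_below: "\<forall>l<L. 0 < f i l \<longrightarrow> link_flow N f l < c l"
    using flows below by (meson le_less_trans)
  have "user_cost N L T c i f = ereal (\<Sum>l<L. f i l * T (c l - link_flow N f l))"
    using nonneg flows_below by (rule user_cost_below_capacity)
  also have "\<dots> \<le> ereal (\<Sum>l<L. f i l * T (c l - G l))"
    unfolding ereal_less_eq
  proof (rule sum_mono)
    fix l assume l: "l \<in> {..<L}"
    show "f i l * T (c l - link_flow N f l) \<le> f i l * T (c l - G l)"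
    proof (cases "0 < f i l")
      case True
      then have "T (c l - link_flow N f l) \<le> T (c l - G l)"
        using l flows below flows_below by (auto intro!: strict_mono_on_leD[OF T_incr[rule_format]])
      then show ?thesis using True by (simp add: mult_left_mono)
    qed (use l nonneg in \<open>force simp: le_less\<close>)
  qed
  finally show ?thesis .
qed

lemma user_cost_along_segment:
  assumes i: "i < N" and x: "\<forall>l<L. 0 \<le> f i l" and y: "\<forall>l<L. 0 \<le> y l" and t: "t \<in> {0..1}"
    and below: "\<forall>l<L. (0 < f i l \<or> 0 < y l) \<longrightarrow> link_flow N f l + t * (y l - f i l) < c l"
  shows "user_cost N L T c i (f(i := \<lambda>l. f i l + t * (y l - f i l)))
      = ereal (\<Sum>l<L. (f i l + t * (y l - f i l)) * T (c l - (link_flow N f l + t * (y l - f i l))))"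
proof -
  define z where "z = (\<lambda>l. f i l + t * (y l - f i l))"
  have flow_z: "link_flow N (f(i := z)) l = link_flow N f l + t * (y l - f i l)" for l
    using link_flow_fun_upd[OF i] by (simp add: z_def)
  have z_nonneg: "\<forall>l<L. 0 \<le> z l"
  proof (intro allI impI)
    fix l assume "l < L"
    have "z l = (1 - t) * f i l + t * y l" by (simp add: z_def algebra_simps)
    then show "0 \<le> z l" using x y t \<open>l < L\<close> by simp
  qed
  have "\<forall>l<L. 0 < z l \<longrightarrow> link_flow N (f(i := z)) l < c l"
  proof (intro allI impI)
    fix l assume l: "l < L" and "0 < z l"
    have "0 < f i l \<or> 0 < y l"
    proof (rule ccontr)
      assume "\<not> (0 < f i l \<or> 0 < y l)"
      then have "f i l = 0" "y l = 0" using x y l by (auto simp: not_less intro: antisym)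
      then show False using \<open>0 < z l\<close> by (simp add: z_def)
    qed
    then show "link_flow N (f(i := z)) l < c l"
      using below l unfolding flow_z by blast
  qed
  with z_nonneg have "user_cost N L T c i (f(i := z))
      = ereal (\<Sum>l<L. z l * T (c l - link_flow N (f(i := z)) l))"
    by (simp add: user_cost_below_capacity)
  then show ?thesis by (simp only: flow_z) (simp add: z_def)
qed

lemma sum_user_cost_below_capacity:
  assumes f: "f \<in> feasible N L r" and below: "\<forall>l<L. link_flow N f l < c l"
  shows "(\<Sum>i<N. user_cost N L T c i f)
      = ereal (\<Sum>l<L. link_flow N f l * T (c l - link_flow N f l))"
proof -
  have "(\<Sum>i<N. user_cost N L T c i f)
      = ereal (\<Sum>i<N. \<Sum>l<L. f i l * T (c l - link_flow N f l))"
    unfolding sum_ereal[of _ "{..<N}", symmetric]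
  proof (rule sum.cong)
    fix i assume "i \<in> {..<N}"
    with f below show "user_cost N L T c i f = ereal (\<Sum>l<L. f i l * T (c l - link_flow N f l))"
      by (intro user_cost_below_capacity) (auto intro: feasible_nonneg)
  qed simp
  also have "\<dots> = ereal (\<Sum>l<L. link_flow N f l * T (c l - link_flow N f l))"
    by (simp add: sum.swap[of _ "{..<N}"] link_flow_def sum_distrib_right)
  finally show ?thesis .
qed

lemma sum_user_cost_infinite:
  assumes f: "f \<in> feasible N L r" and l: "l < L" and pos: "0 < c l" and over: "c l \<le> link_flow N f l"
    and T_nonneg: "\<forall>l<L. \<forall>v\<in>{0..<c l}. 0 \<le> T (c l - v)"
  shows "(\<Sum>i<N. user_cost N L T c i f) = \<infinity>"
proof -
  have "\<exists>i<N. 0 < f i l"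
  proof (rule ccontr)
    assume "\<not> ?thesis"
    then have "\<forall>i<N. f i l \<le> 0" by (meson not_less)
    then have "link_flow N f l \<le> 0"
      unfolding link_flow_def by (intro sum_nonpos) simp
    then show False using pos over by simp
  qed
  then obtain i where i: "i < N" and fi: "0 < f i l" by blast
  have "\<infinity> = user_cost N L T c i f"
    using user_cost_infinite[OF f i l T_nonneg fi over] by simp
  also have "\<dots> \<le> (\<Sum>i<N. user_cost N L T c i f)"
    using f i T_nonneg
    by (intro sum_mono2[of "{..<N}" "{i}", simplified]) (auto intro: user_cost_nonneg)
  finally show ?thesis by simp
qed

section \<open>The bargaining set\<close>

lemma bargain_set_nonneg:
  assumes "g \<in> bargain_set N L T c r" "i < N"
    and T_nonneg: "\<forall>l<L. \<forall>v\<in>{0..<c l}. 0 \<le> T (c l - v)"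
  shows "0 \<le> g i"
proof -
  obtain M :: nat and p fs where p: "\<forall>m<M. 0 < p m" and fs: "\<forall>m<M. fs m \<in> feasible N L r"
    and g: "\<forall>i<N. g i = (\<Sum>m<M. ereal (p m) * user_cost N L T c i (fs m))"
    using assms(1) unfolding bargain_set_def mem_Collect_eq by blast
  have "0 \<le> ereal (p m) * user_cost N L T c i (fs m)" if "m < M" for m
  proof -
    have "0 \<le> user_cost N L T c i (fs m)"
      using fs that user_cost_nonneg[OF _ assms(2) T_nonneg] by blast
    moreover have "0 \<le> ereal (p m)" using p that by (simp add: less_imp_le)
    ultimately show ?thesis by simp
  qed
  then show ?thesis using g assms(2) by (auto intro: sum_nonneg)
qed

lemma cost_vector_in_bargain_set:
  assumes "f \<in> feasible N L r"
  shows "(\<lambda>i. user_cost N L T c i f) \<in> bargain_set N L T c r"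
  unfolding bargain_set_def using assms
  by (intro CollectI exI[of _ "1::nat"] exI[of _ "\<lambda>_. 1"] exI[of _ "\<lambda>_. f"]) simp

lemma convex_pair_in_bargain_set:
  assumes "f \<in> feasible N L r" "f' \<in> feasible N L r" "0 < t" "t < 1"
  shows "(\<lambda>i. ereal t * user_cost N L T c i f + ereal (1 - t) * user_cost N L T c i f')
      \<in> bargain_set N L T c r"
  unfolding bargain_set_def using assms
  by (intro CollectI exI[of _ "2::nat"] exI[of _ "\<lambda>m. if m = 0 then t else 1 - t"]
      exI[of _ "\<lambda>m. if m = 0 then f else f'"]) (simp add: numeral_2_eq_2)

lemma NBS_sum_le_sum_disagreement:
  "is_NBS N L T c r Jhat gt \<Longrightarrow> (\<Sum>i<N. gt i) \<le> (\<Sum>i<N. Jhat i)"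
  by (intro sum_mono) (simp add: is_NBS_def)

lemma prod_le_mean_power:
  fixes x :: "nat \<Rightarrow> real"
  assumes "\<And>i. i < n \<Longrightarrow> 0 \<le> x i"
  shows "(\<Prod>i<n. x i) \<le> ((\<Sum>i<n. x i) / n) ^ n"
proof (cases "n = 0")
  case False
  define P where "P = (\<Prod>i<n. x i)"
  have "0 \<le> P" unfolding P_def using assms by (auto intro: prod_nonneg)
  then have "P = (P powr (1 / n)) ^ n"
    using False by (cases "P = 0") (simp_all add: powr_realpow[symmetric] powr_powr)
  also have "\<dots> \<le> (\<Sum>i<n. x i / n) ^ n"
    using arith_geom_mean[of "{..<n}" x] False assms unfolding P_def
    by (intro power_mono) auto
  finally show ?thesis by (simp add: P_def sum_divide_distrib)
qed simp

text \<open>If the bargaining set contains a point giving every user the same gain \<open>\<gamma>\<close> over the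
  disagreement point, the Nash product of that point is \<open>\<gamma>^N\<close>; by AM-GM, any point with a
  smaller total cost has a smaller Nash product.\<close>

lemma NBS_sum_le_equal_gain:
  assumes NBS: "is_NBS N L T c r Jhat gt"
    and T_nonneg: "\<forall>l<L. \<forall>v\<in>{0..<c l}. 0 \<le> T (c l - v)"
    and h: "h \<in> bargain_set N L T c r"
    and J: "\<forall>i<N. Jhat i = ereal (J i)" and gain: "\<forall>i<N. h i = ereal (J i - \<gamma>)" and "0 \<le> \<gamma>"
  shows "(\<Sum>i<N. gt i) \<le> (\<Sum>i<N. h i)"
proof (rule ccontr)
  assume less: "\<not> ?thesis"
  have gt_le: "\<forall>i<N. gt i \<le> Jhat i" and gt_opt: "\<forall>g\<in>bargain_set N L T c r.
      (\<forall>i<N. g i \<le> Jhat i) \<longrightarrow> (\<Prod>i<N. Jhat i - g i) \<le> (\<Prod>i<N. Jhat i - gt i)"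
    and gt_nonneg: "\<forall>i<N. 0 \<le> gt i"
    using NBS bargain_set_nonneg[OF _ _ T_nonneg] by (auto simp: is_NBS_def)
  define d where "d i = J i - real_of_ereal (gt i)" for i
  have gt: "gt i = ereal (J i - d i)" and d_nonneg: "0 \<le> d i" if "i < N" for i
    using gt_le gt_nonneg J that by (cases "gt i"; force simp: d_def)+
  have sums: "(\<Sum>i<N. J i - \<gamma>) < (\<Sum>i<N. J i - d i)"
    using less gt gain by simp
  then have "0 < N" by (cases N) auto
  with sums have sum_d: "(\<Sum>i<N. d i) / N < \<gamma>"
    by (simp add: sum_subtractf divide_less_eq mult.commute)
  have "\<gamma> ^ N \<le> (\<Prod>i<N. d i)"
  proof -
    have "ereal (\<gamma> ^ N) = (\<Prod>i<N. Jhat i - h i)"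
      using J gain by (simp add: prod_ereal[symmetric])
    also have "\<dots> \<le> (\<Prod>i<N. Jhat i - gt i)"
    proof -
      have "\<forall>i<N. h i \<le> Jhat i" using J gain \<open>0 \<le> \<gamma>\<close> by simp
      then show ?thesis using gt_opt h by blast
    qed
    also have "\<dots> = ereal (\<Prod>i<N. d i)"
      using J gt by (simp add: prod_ereal[symmetric])
    finally show ?thesis by simp
  qed
  also have "\<dots> \<le> ((\<Sum>i<N. d i) / N) ^ N"
    using d_nonneg by (rule prod_le_mean_power)
  also have "\<dots> < \<gamma> ^ N"
    using sum_d d_nonneg \<open>0 < N\<close> by (intro power_strict_mono) (auto intro!: divide_nonneg_nonneg sum_nonneg)
  finally show False by simp
qed

section \<open>Derivatives at a one-sided minimum\<close>

lemma has_real_derivative_nonneg_at_left_min: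
  fixes \<phi> :: "real \<Rightarrow> real"
  assumes "(\<phi> has_real_derivative d) (at a within S)" and "a < b" and "{a..b} \<subseteq> S"
    and "\<forall>t\<in>{a..b}. \<phi> a \<le> \<phi> t"
  shows "0 \<le> d"
proof (rule ccontr)
  assume "\<not> 0 \<le> d"
  then obtain e where e: "0 < e" and dec: "\<forall>h>0. a + h \<in> S \<longrightarrow> h < e \<longrightarrow> \<phi> (a + h) < \<phi> a"
    using has_real_derivative_neg_dec_right[OF assms(1)] by force
  define h where "h = min (e / 2) (b - a)"
  have h: "0 < h" "h < e" "a + h \<in> {a..b}"
    using e assms(2) by (auto simp: h_def)
  then have "\<phi> (a + h) < \<phi> a" using dec assms(3) by blast
  moreover have "\<phi> a \<le> \<phi> (a + h)" using assms(4) h by blast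
  ultimately show False by simp
qed

lemma mono_on_has_real_derivative_nonneg:
  fixes h :: "real \<Rightarrow> real"
  assumes "mono_on {a..<c} h" "(h has_real_derivative d) (at v within {a..<c})" "v \<in> {a..<c}"
  shows "0 \<le> d"
  using assms
  by (intro has_real_derivative_nonneg_at_left_min[of h d v "{a..<c}" "(v + c) / 2"])
    (auto simp: mono_on_def)

lemma has_real_derivative_along_segment:
  assumes "(h has_real_derivative D) (at a within S)" "\<forall>t\<in>A. a + t * \<delta> \<in> S"
  shows "((\<lambda>t. h (a + t * \<delta>)) has_real_derivative D * \<delta>) (at 0 within A)"
proof -
  have outer: "(h has_real_derivative D) (at ((\<lambda>t. a + t * \<delta>) 0) within ((\<lambda>t. a + t * \<delta>) ` A))"
    using assms by (auto intro: DERIV_subset)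
  have inner: "((\<lambda>t. a + t * \<delta>) has_real_derivative \<delta>) (at 0 within A)"
    by (auto intro!: derivative_eq_intros)
  from DERIV_image_chain[OF outer inner] show ?thesis
    by (simp add: o_def)
qed

lemma has_real_derivative_segment_cost:
  assumes D: "\<forall>l<L. \<forall>v\<in>{0..<c l}. ((\<lambda>v. T (c l - v)) has_real_derivative D l v) (at v within {0..<c l})"
    and inside: "\<forall>l<L. \<delta> l \<noteq> 0 \<longrightarrow> (\<forall>t\<in>A. F l + t * \<delta> l \<in> {0..<c l})" and "0 \<in> A"
  shows "((\<lambda>t. \<Sum>l<L. (x l + t * \<delta> l) * T (c l - (F l + t * \<delta> l))) has_real_derivative
      (\<Sum>l<L. \<delta> l * T (c l - F l) + x l * D l (F l) * \<delta> l)) (at 0 within A)"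
proof (rule DERIV_sum)
  fix l assume "l \<in> {..<L}"
  show "((\<lambda>t. (x l + t * \<delta> l) * T (c l - (F l + t * \<delta> l))) has_real_derivative
      \<delta> l * T (c l - F l) + x l * D l (F l) * \<delta> l) (at 0 within A)"
  proof (cases "\<delta> l = 0")
    case False
    then have "F l \<in> {0..<c l}" using inside \<open>l \<in> {..<L}\<close> \<open>0 \<in> A\<close> by force
    then have "((\<lambda>t. T (c l - (F l + t * \<delta> l))) has_real_derivative D l (F l) * \<delta> l) (at 0 within A)"
      using D inside False \<open>l \<in> {..<L}\<close>
      by (intro has_real_derivative_along_segment[where S="{0..<c l}"]) auto
    then show ?thesis
      by (auto intro!: derivative_eq_intros simp: algebra_simps)
  qed simp
qed

lemma exists_step_below:
  fixes F \<delta> c :: "nat \<Rightarrow> real"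
  assumes "finite U" "\<forall>l\<in>U. F l < c l"
  shows "\<exists>t0>0. t0 \<le> 1 \<and> (\<forall>l\<in>U. \<forall>t\<in>{0..t0}. F l + t * \<delta> l < c l)"
proof -
  have "\<forall>\<^sub>F t in nhds 0. \<forall>l\<in>U. F l + t * \<delta> l < c l"
  proof (intro eventually_ball_finite ballI)
    fix l assume "l \<in> U"
    have "((\<lambda>t. F l + t * \<delta> l) \<longlongrightarrow> F l + 0 * \<delta> l) (nhds 0)"
      by (intro tendsto_intros filterlim_ident)
    then show "\<forall>\<^sub>F t in nhds 0. F l + t * \<delta> l < c l"
      using assms(2) \<open>l \<in> U\<close> by (intro order_tendstoD(2)) auto
  qed (rule assms(1))
  then obtain e where "0 < e" and e: "\<forall>t. dist t 0 < e \<longrightarrow> (\<forall>l\<in>U. F l + t * \<delta> l < c l)"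
    unfolding eventually_nhds_metric by blast
  then show ?thesis
    by (intro exI[of _ "min 1 (e / 2)"]) (auto simp: dist_real_def)
qed

section \<open>Nash equilibria\<close>

lemma exists_share_of_gap:
  fixes G u :: "nat \<Rightarrow> real"
  assumes "0 < \<rho>" "\<rho> \<le> (\<Sum>l<L. G l - u l)"
  shows "\<exists>z. (\<forall>l<L. 0 \<le> z l \<and> (0 < z l \<longrightarrow> u l + z l \<le> G l)) \<and> (\<Sum>l<L. z l) = \<rho>"
proof -
  define p where "p l = max 0 (G l - u l)" for l
  define P where "P = (\<Sum>l<L. p l)"
  have "\<rho> \<le> P"
    using assms(2) unfolding P_def p_def by (smt (verit) sum_mono)
  then have P: "0 < P" using assms(1) by simp
  define z where "z l = \<rho> * p l / P" for l
  have z_le: "z l \<le> p l" for l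
  proof -
    have "\<rho> * p l \<le> P * p l"
      using \<open>\<rho> \<le> P\<close> by (intro mult_right_mono) (auto simp: p_def)
    then show ?thesis using P by (simp add: z_def divide_le_eq mult.commute)
  qed
  moreover have "0 \<le> z l" for l
    using P assms(1) by (simp add: z_def p_def)
  moreover have "(\<Sum>l<L. z l) = \<rho>"
    using P by (simp add: z_def P_def sum_divide_distrib[symmetric] sum_distrib_left[symmetric])
  moreover have "u l + z l \<le> G l" if "0 < z l" for l
    using z_le[of l] that by (auto simp: p_def max_def split: if_splits)
  ultimately show ?thesis
    by (intro exI[of _ z]) auto
qed

text \<open>A user at equilibrium can always undercut the link flows of any other profile: it
  fills the room left by the others, so no link carries more than in \<open>f\<close>.\<close>

lemma NEP_cost_le_cost_at_flows:
  assumes NEP: "is_NEP N L T c r fhat"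
    and T_incr: "\<forall>l<L. strict_mono_on {0..<c l} (\<lambda>x. T (c l - x))"
    and f: "f \<in> feasible N L r" and below: "\<forall>l<L. link_flow N f l < c l"
    and i: "i < N" and dem: "0 < r i"
  shows "\<exists>z. (\<forall>l<L. 0 \<le> z l \<and> z l \<le> link_flow N f l) \<and> (\<Sum>l<L. z l) = r i \<and>
      user_cost N L T c i fhat \<le> ereal (\<Sum>l<L. z l * T (c l - link_flow N f l))"
proof -
  have fhat: "fhat \<in> feasible N L r" using NEP by (simp add: is_NEP_def)
  define others where "others l = link_flow N fhat l - fhat i l" for l
  have others_nonneg: "0 \<le> others l" if "l < L" for l
    using sum_le_link_flow[OF fhat _ that, of "{i}"] i by (simp add: others_def)
  have "(\<Sum>l<L. link_flow N f l - others l) = r i"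
    using sum_link_flow[OF f] sum_link_flow[OF fhat] feasible_sum[OF fhat i]
    by (simp add: others_def sum_subtractf)
  then obtain z where z: "\<forall>l<L. 0 \<le> z l \<and> (0 < z l \<longrightarrow> others l + z l \<le> link_flow N f l)"
    and z_sum: "(\<Sum>l<L. z l) = r i"
    using exists_share_of_gap[OF dem, where G="link_flow N f" and u=others and L=L] by auto
  have "user_cost N L T c i fhat \<le> user_cost N L T c i (fhat(i := z))"
    using NEP i z z_sum by (simp add: is_NEP_def user_strategy_def)
  also have "\<dots> \<le> ereal (\<Sum>l<L. (fhat(i := z)) i l * T (c l - link_flow N f l))"
    using z others_nonneg below link_flow_fun_upd[OF i]
    by (intro user_cost_le_at_larger_flows[OF T_incr]) (auto simp: others_def)
  also have "\<dots> = ereal (\<Sum>l<L. z l * T (c l - link_flow N f l))"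
    by simp
  finally have cost: "user_cost N L T c i fhat \<le> ereal (\<Sum>l<L. z l * T (c l - link_flow N f l))" .
  moreover have "\<forall>l<L. 0 \<le> z l \<and> z l \<le> link_flow N f l"
    using z others_nonneg link_flow_nonneg[OF f] by (smt (verit))
  ultimately show ?thesis
    using z_sum by blast
qed

lemma NEP_cost_finite:
  assumes NEP: "is_NEP N L T c r fhat"
    and T_nonneg: "\<forall>l<L. \<forall>v\<in>{0..<c l}. 0 \<le> T (c l - v)"
    and T_incr: "\<forall>l<L. strict_mono_on {0..<c l} (\<lambda>x. T (c l - x))"
    and f: "f \<in> feasible N L r" and below: "\<forall>l<L. link_flow N f l < c l"
    and i: "i < N" and dem: "0 < r i"
  shows "\<bar>user_cost N L T c i fhat\<bar> \<noteq> \<infinity>"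
proof -
  have "0 \<le> user_cost N L T c i fhat"
    using NEP i T_nonneg by (auto simp: is_NEP_def intro: user_cost_nonneg)
  moreover obtain x where "user_cost N L T c i fhat \<le> ereal x"
    using NEP_cost_le_cost_at_flows[OF NEP T_incr f below i dem] by blast
  ultimately show ?thesis by (cases "user_cost N L T c i fhat") auto
qed

lemma exists_step_keeping_flows_below:
  assumes fhat: "fhat \<in> feasible N L r" and i: "i < N" and j: "j < N" and "i \<noteq> j"
    and below: "\<forall>l<L. (0 < fhat i l \<or> 0 < fhat j l) \<longrightarrow> link_flow N fhat l < c l"
  shows "\<exists>t0>0. t0 \<le> 1 \<and> (\<forall>l<L. \<forall>t\<in>{0..t0}. (0 < fhat i l \<or> 0 < fhat j l) \<longrightarrow>
      link_flow N fhat l + t * (fhat j l - fhat i l) \<in> {0..<c l})"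
proof -
  define U where "U = {l. l < L \<and> (0 < fhat i l \<or> 0 < fhat j l)}"
  obtain t0 where t0: "0 < t0" "t0 \<le> 1" and U_below: "\<forall>l\<in>U. \<forall>t\<in>{0..t0}.
      link_flow N fhat l + t * (fhat j l - fhat i l) < c l"
    using exists_step_below[where U=U and F="link_flow N fhat" and \<delta>="\<lambda>l. fhat j l - fhat i l" and c=c]
      below by (auto simp: U_def)
  have "0 \<le> link_flow N fhat l + t * (fhat j l - fhat i l)" if "l < L" "t \<in> {0..1}" for l t
  proof -
    have "fhat i l + fhat j l \<le> link_flow N fhat l"
      using sum_le_link_flow[OF fhat _ that(1), of "{i, j}"] i j \<open>i \<noteq> j\<close> by simp
    moreover have "0 \<le> (1 - t) * fhat i l + (1 + t) * fhat j l"
      using that feasible_nonneg[OF fhat] i j by simp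
    ultimately show ?thesis by (simp add: algebra_simps)
  qed
  with t0 U_below show ?thesis by (auto simp: U_def)
qed

lemma NEP_variational_inequality:
  assumes NEP: "is_NEP N L T c r fhat"
    and i: "i < N" and j: "j < N" and "i \<noteq> j" and "r i = r j"
    and below: "\<forall>l<L. (0 < fhat i l \<or> 0 < fhat j l) \<longrightarrow> link_flow N fhat l < c l"
    and D: "\<forall>l<L. \<forall>v\<in>{0..<c l}. ((\<lambda>v. T (c l - v)) has_real_derivative D l v) (at v within {0..<c l})"
  shows "0 \<le> (\<Sum>l<L. (fhat j l - fhat i l) * T (c l - link_flow N fhat l)
      + fhat i l * D l (link_flow N fhat l) * (fhat j l - fhat i l))"
proof -
  have fhat: "fhat \<in> feasible N L r" using NEP by (simp add: is_NEP_def)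
  define x where "x = fhat i"
  define F where "F = link_flow N fhat"
  define \<delta> where "\<delta> l = fhat j l - fhat i l" for l
  define z where "z t = (\<lambda>l. x l + t * \<delta> l)" for t
  define \<phi> where "\<phi> t = (\<Sum>l<L. (x l + t * \<delta> l) * T (c l - (F l + t * \<delta> l)))" for t
  obtain t0 where t0: "0 < t0" "t0 \<le> 1" and step: "\<forall>l<L. \<forall>t\<in>{0..t0}.
      (0 < fhat i l \<or> 0 < fhat j l) \<longrightarrow> F l + t * \<delta> l \<in> {0..<c l}"
    using exists_step_keeping_flows_below[OF fhat i j \<open>i \<noteq> j\<close> below] by (auto simp: F_def \<delta>_def)
  have strategy: "user_strategy L (r i) (z t)" if "t \<in> {0..1}" for t
  proof -
    have "user_strategy L (r i) (fhat i)" "user_strategy L (r i) (fhat j)"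
      using fhat i j \<open>r i = r j\<close> unfolding feasible_def by (metis mem_Collect_eq)+
    from user_strategy_segment[OF this that] show ?thesis
      by (simp add: z_def x_def \<delta>_def)
  qed
  have cost_z: "user_cost N L T c i (fhat(i := z t)) = ereal (\<phi> t)" if "t \<in> {0..t0}" for t
    using user_cost_along_segment[OF i, of L fhat "fhat j" t c T] feasible_nonneg[OF fhat] i j step that t0
    by (auto simp: z_def \<phi>_def x_def F_def \<delta>_def)
  have min: "\<forall>t\<in>{0..t0}. \<phi> 0 \<le> \<phi> t"
  proof
    fix t assume t: "t \<in> {0..t0}"
    have "fhat(i := z 0) = fhat" by (auto simp: z_def x_def)
    then have "ereal (\<phi> 0) = user_cost N L T c i fhat"
      using cost_z[of 0] t0 by simp
    also have "\<dots> \<le> user_cost N L T c i (fhat(i := z t))"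
      using NEP i strategy[of t] t t0 by (simp add: is_NEP_def)
    also have "\<dots> = ereal (\<phi> t)"
      using cost_z[OF t] .
    finally show "\<phi> 0 \<le> \<phi> t" by simp
  qed
  have "F l + t * \<delta> l \<in> {0..<c l}" if "l < L" "\<delta> l \<noteq> 0" "t \<in> {0..t0}" for l t
  proof -
    have "0 < fhat i l \<or> 0 < fhat j l"
    proof (rule ccontr)
      assume "\<not> (0 < fhat i l \<or> 0 < fhat j l)"
      then have "fhat i l = 0" "fhat j l = 0"
        using feasible_nonneg[OF fhat i that(1)] feasible_nonneg[OF fhat j that(1)] by auto
      then show False using that(2) by (simp add: \<delta>_def)
    qed
    then show ?thesis using step that(1,3) by blast
  qed
  then have "(\<phi> has_real_derivative (\<Sum>l<L. \<delta> l * T (c l - F l) + x l * D l (F l) * \<delta> l))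
      (at 0 within {0..t0})"
    unfolding \<phi>_def using D t0 by (intro has_real_derivative_segment_cost) auto
  then show ?thesis
    using has_real_derivative_nonneg_at_left_min[OF _ t0(1) order_refl min]
    by (simp add: x_def F_def \<delta>_def)
qed

text \<open>Adding the two inequalities gives \<open>\<Sum>\<^sub>l d\<^sub>l (x\<^sub>l - y\<^sub>l)\<^sup>2 \<le> 0\<close>, so the derivative terms
  vanish and the inequalities collapse to an equality.\<close>

lemma sum_eq_of_symmetric_variational_inequalities:
  fixes x y g d :: "nat \<Rightarrow> real"
  assumes d: "\<forall>l<L. x l \<noteq> y l \<longrightarrow> 0 \<le> d l"
    and vi_x: "0 \<le> (\<Sum>l<L. (y l - x l) * g l + x l * d l * (y l - x l))"
    and vi_y: "0 \<le> (\<Sum>l<L. (x l - y l) * g l + y l * d l * (x l - y l))"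
  shows "(\<Sum>l<L. x l * g l) = (\<Sum>l<L. y l * g l)"
proof -
  have d_sq_nonneg: "\<forall>l\<in>{..<L}. 0 \<le> d l * (y l - x l)\<^sup>2"
    using d by (auto intro: mult_nonneg_nonneg)
  have "(\<Sum>l<L. (y l - x l) * g l + x l * d l * (y l - x l))
      + (\<Sum>l<L. (x l - y l) * g l + y l * d l * (x l - y l)) = - (\<Sum>l<L. d l * (y l - x l)\<^sup>2)"
    by (simp add: sum.distrib[symmetric] sum_negf[symmetric] power2_eq_square algebra_simps)
  then have "(\<Sum>l<L. d l * (y l - x l)\<^sup>2) \<le> 0"
    using vi_x vi_y by linarith
  then have "\<forall>l\<in>{..<L}. d l * (y l - x l)\<^sup>2 = 0"
    using d_sq_nonneg by (subst sum_nonneg_eq_0_iff[symmetric]) (auto intro: antisym sum_nonneg)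
  then have d_zero: "d l * (y l - x l) = 0" if "l < L" for l
    using that by (simp add: power2_eq_square)
  have "(\<Sum>l<L. (y l - x l) * g l + x l * d l * (y l - x l)) = (\<Sum>l<L. (y l - x l) * g l)"
    "(\<Sum>l<L. (x l - y l) * g l + y l * d l * (x l - y l)) = - (\<Sum>l<L. (y l - x l) * g l)"
    using d_zero by (auto simp: sum_negf[symmetric] algebra_simps intro!: sum.cong) metis+
  then have "(\<Sum>l<L. (y l - x l) * g l) = 0"
    using vi_x vi_y by linarith
  then show ?thesis
    by (simp add: left_diff_distrib sum_subtractf)
qed

lemma NEP_equal_demands_equal_cost:
  assumes NEP: "is_NEP N L T c r fhat"
    and T_nonneg: "\<forall>l<L. \<forall>v\<in>{0..<c l}. 0 \<le> T (c l - v)"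
    and T_incr: "\<forall>l<L. strict_mono_on {0..<c l} (\<lambda>x. T (c l - x))"
    and T_C1: "\<forall>l<L. C1_on {0..<c l} (\<lambda>x. T (c l - x))"
    and i: "i < N" and j: "j < N" and "r i = r j"
    and finite: "user_cost N L T c i fhat \<noteq> \<infinity>" "user_cost N L T c j fhat \<noteq> \<infinity>"
  shows "user_cost N L T c i fhat = user_cost N L T c j fhat"
proof (cases "i = j")
  case False
  have fhat: "fhat \<in> feasible N L r" using NEP by (simp add: is_NEP_def)
  obtain D where D: "\<forall>l<L. \<forall>v\<in>{0..<c l}.
      ((\<lambda>v. T (c l - v)) has_real_derivative D l v) (at v within {0..<c l})"
    using T_C1 unfolding C1_on_def by metis
  have below: "\<forall>l<L. (0 < fhat i l \<or> 0 < fhat j l) \<longrightarrow> link_flow N fhat l < c l"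
    using finite user_cost_infinite[OF fhat i _ T_nonneg] user_cost_infinite[OF fhat j _ T_nonneg]
    by (meson not_less)
  define g where "g l = T (c l - link_flow N fhat l)" for l
  define d where "d l = D l (link_flow N fhat l)" for l
  have "0 \<le> d l" if "l < L" "fhat i l \<noteq> fhat j l" for l
  proof -
    have "0 < fhat i l \<or> 0 < fhat j l"
      using that feasible_nonneg[OF fhat i that(1)] feasible_nonneg[OF fhat j that(1)] by auto
    then have "link_flow N fhat l \<in> {0..<c l}"
      using below link_flow_nonneg[OF fhat that(1)] that(1) by auto
    then show "0 \<le> d l"
      unfolding d_def using that T_incr D
      by (intro mono_on_has_real_derivative_nonneg[of 0 "c l" "\<lambda>v. T (c l - v)"])
        (auto intro: strict_mono_on_imp_mono_on)
  qed
  moreover have "0 \<le> (\<Sum>l<L. (fhat j l - fhat i l) * g l + fhat i l * d l * (fhat j l - fhat i l))"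
    using NEP_variational_inequality[OF NEP i j False \<open>r i = r j\<close> below D]
    by (simp add: g_def d_def)
  moreover have "0 \<le> (\<Sum>l<L. (fhat i l - fhat j l) * g l + fhat j l * d l * (fhat i l - fhat j l))"
    using NEP_variational_inequality[OF NEP j i _ _ _ D] False \<open>r i = r j\<close> below
    by (simp add: g_def d_def conj_commute disj_commute)
  ultimately have "(\<Sum>l<L. fhat i l * g l) = (\<Sum>l<L. fhat j l * g l)"
    by (intro sum_eq_of_symmetric_variational_inequalities) auto
  moreover have "user_cost N L T c i fhat = ereal (\<Sum>l<L. fhat i l * g l)"
    "user_cost N L T c j fhat = ereal (\<Sum>l<L. fhat j l * g l)"
    using below feasible_nonneg[OF fhat] i j
    by (auto simp: g_def intro!: user_cost_below_capacity)
  ultimately show ?thesis by simp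
qed simp

lemma NEP_equal_demands_common_cost:
  assumes equal: "\<forall>i<N. r i = (\<Sum>j<N. r j) / real N" and "N \<noteq> 0"
    and T_nonneg: "\<forall>l<L. \<forall>v\<in>{0..<c l}. 0 \<le> T (c l - v)"
    and T_incr: "\<forall>l<L. strict_mono_on {0..<c l} (\<lambda>x. T (c l - x))"
    and T_C1: "\<forall>l<L. C1_on {0..<c l} (\<lambda>x. T (c l - x))"
    and NEP: "is_NEP N L T c r fhat" and dem: "\<forall>i<N. 0 < r i"
    and f: "f \<in> feasible N L r" and below: "\<forall>l<L. link_flow N f l < c l"
  shows "\<exists>J. \<forall>i<N. user_cost N L T c i fhat = ereal J"
proof (intro exI allI impI)
  fix i assume "i < N"
  have finite: "\<bar>user_cost N L T c k fhat\<bar> \<noteq> \<infinity>" if "k < N" for k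
    using NEP_cost_finite[OF NEP T_nonneg T_incr f below that] dem that by simp
  have "r i = r 0"
    using equal \<open>i < N\<close> \<open>N \<noteq> 0\<close> by (metis not_gr0)
  then have "user_cost N L T c i fhat = user_cost N L T c 0 fhat"
    using \<open>i < N\<close> finite[OF \<open>i < N\<close>] finite[of 0] \<open>N \<noteq> 0\<close>
    by (intro NEP_equal_demands_equal_cost[OF NEP T_nonneg T_incr T_C1]) auto
  then show "user_cost N L T c i fhat = ereal (real_of_ereal (user_cost N L T c 0 fhat))"
    using finite[of 0] \<open>N \<noteq> 0\<close> by (simp add: ereal_real')
qed

section \<open>Social optimality of the Nash bargaining solution\<close>

lemma exists_convex_combination_eq:
  fixes a b u :: real
  assumes "b < u" "u < a"
  shows "\<exists>t. 0 < t \<and> t < 1 \<and> t * a + (1 - t) * b = u"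
proof -
  define t where "t = (u - b) / (a - b)"
  have "0 < t" "t < 1" using assms by (simp_all add: t_def field_simps)
  moreover have "t * a + (1 - t) * b = b + t * (a - b)" by (simp add: algebra_simps)
  moreover have "\<dots> = u" using assms by (simp add: t_def)
  ultimately show ?thesis by blast
qed

lemma two_user_complement_profile:
  assumes "N = 2" "k < 2" and z: "\<forall>l<L. 0 \<le> z l \<and> z l \<le> G l"
    and "(\<Sum>l<L. z l) = r k" "(\<Sum>l<L. G l) = r 0 + r 1"
  defines "f \<equiv> \<lambda>i l. if i = k then z l else G l - z l"
  shows "f \<in> feasible N L r" and "link_flow N f l = G l"
proof -
  have "(\<Sum>l<L. G l - z l) = r (1 - k)"
    using assms by (auto simp: sum_subtractf less_2_cases_iff)
  then show "f \<in> feasible N L r"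
    using assms by (auto simp: feasible_def user_strategy_def less_2_cases_iff)
  show "link_flow N f l = G l"
    using assms by (auto simp: link_flow_def numeral_2_eq_2 less_2_cases_iff)
qed

text \<open>With two users, the profiles in which one user plays its deviation \<open>z\<^sub>k\<close> against the
  flows of \<open>f\<close> and the other takes the rest both induce the link flows of \<open>f\<close>; a suitable
  mixture of them lowers both users' costs below the equilibrium by the same amount.\<close>

lemma two_user_equal_gain_point:
  assumes N2: "N = 2" and A: "A \<in> feasible N L r" and B: "B \<in> feasible N L r"
    and cost_A: "user_cost N L T c 0 A = ereal a" "user_cost N L T c 1 A = ereal (s - a)"
    and cost_B: "user_cost N L T c 0 B = ereal (s - b)" "user_cost N L T c 1 B = ereal b"
    and J: "J 0 \<le> a" "J 1 \<le> b" "s < J 0 + J 1"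
  shows "\<exists>h\<in>bargain_set N L T c r. \<forall>i<N. h i = ereal (J i - (J 0 + J 1 - s) / 2)"
proof -
  define \<gamma> where "\<gamma> = (J 0 + J 1 - s) / 2"
  have "s - b < J 0 - \<gamma>" and "J 0 - \<gamma> < a"
    using J unfolding \<gamma>_def by (simp_all add: field_simps)
  then obtain t where t: "0 < t" "t < 1" and mix: "t * a + (1 - t) * (s - b) = J 0 - \<gamma>"
    using exists_convex_combination_eq by blast
  define h where "h i = ereal t * user_cost N L T c i A + ereal (1 - t) * user_cost N L T c i B" for i
  have "h 0 = ereal (t * a + (1 - t) * (s - b))" "h 1 = ereal (t * (s - a) + (1 - t) * b)"
    using cost_A cost_B by (simp_all add: h_def)
  moreover have "t * (s - a) + (1 - t) * b = s - (t * a + (1 - t) * (s - b))"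
    by (simp add: algebra_simps)
  moreover have "s - (J 0 - \<gamma>) = J 1 - \<gamma>"
    by (simp add: \<gamma>_def field_simps)
  ultimately have "h 0 = ereal (J 0 - \<gamma>)" "h 1 = ereal (J 1 - \<gamma>)"
    using mix by simp_all
  moreover have "h \<in> bargain_set N L T c r"
    unfolding h_def using A B t by (rule convex_pair_in_bargain_set)
  ultimately show ?thesis
    using N2 by (auto simp: less_2_cases_iff \<gamma>_def)
qed

lemma NBS_sum_le_sys_cost_two_users:
  assumes N2: "N = 2"
    and T_nonneg: "\<forall>l<L. \<forall>v\<in>{0..<c l}. 0 \<le> T (c l - v)"
    and T_incr: "\<forall>l<L. strict_mono_on {0..<c l} (\<lambda>x. T (c l - x))"
    and NEP: "is_NEP N L T c r fhat"
    and NBS: "is_NBS N L T c r (\<lambda>i. user_cost N L T c i fhat) gt"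
    and dem: "\<forall>i<N. 0 < r i"
    and f: "f \<in> feasible N L r" and below: "\<forall>l<L. link_flow N f l < c l"
  shows "(\<Sum>i<N. gt i) \<le> ereal (\<Sum>l<L. link_flow N f l * T (c l - link_flow N f l))"
proof -
  define G where "G = link_flow N f"
  define s where "s = (\<Sum>l<L. G l * T (c l - G l))"
  define J where "J i = real_of_ereal (user_cost N L T c i fhat)" for i
  have Jhat: "\<forall>i<N. user_cost N L T c i fhat = ereal (J i)"
    using NEP_cost_finite[OF NEP T_nonneg T_incr f below] dem by (simp add: J_def ereal_real')
  have "\<forall>k<N. \<exists>z. (\<forall>l<L. 0 \<le> z l \<and> z l \<le> G l) \<and> (\<Sum>l<L. z l) = r k \<and>
      J k \<le> (\<Sum>l<L. z l * T (c l - G l))"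
    using NEP_cost_le_cost_at_flows[OF NEP T_incr f below] dem Jhat by (simp add: G_def)
  then obtain z where z: "\<forall>l<L. 0 \<le> z k l \<and> z k l \<le> G l" "(\<Sum>l<L. z k l) = r k"
      and J_le: "J k \<le> (\<Sum>l<L. z k l * T (c l - G l))" if "k < N" for k
    by metis
  define a where "a k = (\<Sum>l<L. z k l * T (c l - G l))" for k
  define A where "A k = (\<lambda>i l. if i = k then z k l else G l - z k l)" for k
  have sum_G: "(\<Sum>l<L. G l) = r 0 + r 1"
    using sum_link_flow[OF f] N2 by (simp add: G_def numeral_2_eq_2)
  have A: "A k \<in> feasible N L r" "\<forall>l<L. link_flow N (A k) l = G l" if "k < N" for k
    using two_user_complement_profile[OF N2 _ z sum_G] that N2 by (simp_all add: A_def)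
  have cost_A: "user_cost N L T c i (A k) = ereal (if i = k then a k else s - a k)"
    if "k < N" "i < N" for k i
    using user_cost_at_link_flows[OF A(1)[OF that(1)] that(2) A(2)[OF that(1)]] below that
    by (simp add: A_def a_def s_def G_def left_diff_distrib sum_subtractf)
  have users: "{..<N} = {0, 1}" using N2 by auto
  show ?thesis
  proof (cases "J 0 + J 1 \<le> s")
    case True
    have "(\<Sum>i<N. gt i) \<le> ereal (J 0 + J 1)"
      using NBS_sum_le_sum_disagreement[OF NBS] Jhat users N2 by simp
    also have "\<dots> \<le> ereal s" using True by simp
    finally show ?thesis by (simp add: s_def G_def)
  next
    case False
    have "A 0 \<in> feasible N L r" "A 1 \<in> feasible N L r"
      using A N2 by simp_all
    moreover have "user_cost N L T c 0 (A 0) = ereal (a 0)" "user_cost N L T c 1 (A 0) = ereal (s - a 0)"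
      "user_cost N L T c 0 (A 1) = ereal (s - a 1)" "user_cost N L T c 1 (A 1) = ereal (a 1)"
      using cost_A N2 by simp_all
    moreover have "J 0 \<le> a 0" "J 1 \<le> a 1"
      using J_le N2 by (simp_all add: a_def)
    moreover have "s < J 0 + J 1" using False by simp
    ultimately have "\<exists>h\<in>bargain_set N L T c r. \<forall>i<N. h i = ereal (J i - (J 0 + J 1 - s) / 2)"
      by (rule two_user_equal_gain_point[OF N2])
    then obtain h where h: "h \<in> bargain_set N L T c r"
      "\<forall>i<N. h i = ereal (J i - (J 0 + J 1 - s) / 2)" by blast
    with False have "(\<Sum>i<N. gt i) \<le> (\<Sum>i<N. h i)"
      by (intro NBS_sum_le_equal_gain[OF NBS T_nonneg h(1) Jhat h(2)]) simp
    also have "\<dots> = ereal s"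
      using h users N2 by (simp add: field_simps)
    finally show ?thesis by (simp add: s_def G_def)
  qed
qed

lemma even_split_profile:
  assumes equal: "\<forall>i<N. r i = (\<Sum>j<N. r j) / real N" and "N \<noteq> 0"
    and f: "f \<in> feasible N L r" and below: "\<forall>l<L. link_flow N f l < c l"
  defines "P \<equiv> \<lambda>(i::nat) l. link_flow N f l / N"
  shows "P \<in> feasible N L r"
    and "\<forall>i<N. user_cost N L T c i P = ereal ((\<Sum>l<L. link_flow N f l * T (c l - link_flow N f l)) / N)"
proof -
  show P_feasible: "P \<in> feasible N L r"
    unfolding feasible_def user_strategy_def
  proof (intro CollectI allI impI)
    fix i assume "i < N"
    have "\<forall>l<L. 0 \<le> P i l" using link_flow_nonneg[OF f] by (simp add: P_def)
    moreover have "(\<Sum>l<L. P i l) = r i"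
      using sum_link_flow[OF f]
      by (simp add: P_def sum_divide_distrib[symmetric] equal[rule_format, OF \<open>i < N\<close>])
    ultimately show "(\<forall>l<L. 0 \<le> P i l) \<and> (\<Sum>l<L. P i l) = r i" ..
  qed
  have "\<forall>l<L. link_flow N P l = link_flow N f l"
    using \<open>N \<noteq> 0\<close> by (simp add: link_flow_def P_def)
  then show "\<forall>i<N. user_cost N L T c i P
      = ereal ((\<Sum>l<L. link_flow N f l * T (c l - link_flow N f l)) / N)"
    using user_cost_at_link_flows[OF P_feasible] below
    by (simp add: P_def sum_divide_distrib[symmetric])
qed

lemma NBS_sum_le_sys_cost_equal_demands:
  assumes equal: "\<forall>i<N. r i = (\<Sum>j<N. r j) / real N"
    and T_nonneg: "\<forall>l<L. \<forall>v\<in>{0..<c l}. 0 \<le> T (c l - v)"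
    and T_incr: "\<forall>l<L. strict_mono_on {0..<c l} (\<lambda>x. T (c l - x))"
    and T_C1: "\<forall>l<L. C1_on {0..<c l} (\<lambda>x. T (c l - x))"
    and NEP: "is_NEP N L T c r fhat"
    and NBS: "is_NBS N L T c r (\<lambda>i. user_cost N L T c i fhat) gt"
    and dem: "\<forall>i<N. 0 < r i"
    and f: "f \<in> feasible N L r" and below: "\<forall>l<L. link_flow N f l < c l"
  shows "(\<Sum>i<N. gt i) \<le> ereal (\<Sum>l<L. link_flow N f l * T (c l - link_flow N f l))"
    (is "_ \<le> ereal ?s")
proof (cases "N = 0")
  case False
  obtain J where Jhat: "\<forall>i<N. user_cost N L T c i fhat = ereal J"
    using NEP_equal_demands_common_cost[OF equal False T_nonneg T_incr T_C1 NEP dem f below] by blast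
  show ?thesis
  proof (cases "N * J \<le> ?s")
    case True
    have "(\<Sum>i<N. gt i) \<le> ereal (N * J)"
      using NBS_sum_le_sum_disagreement[OF NBS] Jhat by simp
    also have "\<dots> \<le> ereal ?s" using True by simp
    finally show ?thesis .
  next
    case less: False
    define P :: "nat \<Rightarrow> nat \<Rightarrow> real" where "P = (\<lambda>i l. link_flow N f l / N)"
    have P: "P \<in> feasible N L r" "\<forall>i<N. user_cost N L T c i P = ereal (J - (J - ?s / N))"
      using even_split_profile[OF equal False f below] by (simp_all add: P_def)
    then have "(\<Sum>i<N. gt i) \<le> (\<Sum>i<N. user_cost N L T c i P)"
      using less False
      by (intro NBS_sum_le_equal_gain[OF NBS T_nonneg cost_vector_in_bargain_set _ P(2)])
        (auto simp: Jhat field_simps)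
    also have "\<dots> = ereal ?s"
      using P(2) False by simp
    finally show ?thesis .
  qed
qed (simp add: link_flow_def)

lemma NBS_sum_le_sum_user_cost:
  assumes cap_pos: "\<forall>l<L. 0 < c l"
    and T_nonneg: "\<forall>l<L. \<forall>v\<in>{0..<c l}. 0 \<le> T (c l - v)"
    and T_incr: "\<forall>l<L. strict_mono_on {0..<c l} (\<lambda>x. T (c l - x))"
    and T_C1: "\<forall>l<L. C1_on {0..<c l} (\<lambda>x. T (c l - x))"
    and case_split: "N = 2 \<or> (\<forall>i<N. r i = (\<Sum>j<N. r j) / real N)"
    and NEP: "is_NEP N L T c r fhat"
    and NBS: "is_NBS N L T c r (\<lambda>i. user_cost N L T c i fhat) gt"
    and dem: "\<forall>i<N. 0 < r i"
    and f: "f \<in> feasible N L r"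
  shows "(\<Sum>i<N. gt i) \<le> (\<Sum>i<N. user_cost N L T c i f)"
proof (cases "\<forall>l<L. link_flow N f l < c l")
  case True
  then show ?thesis
    using case_split sum_user_cost_below_capacity[OF f True]
      NBS_sum_le_sys_cost_two_users[OF _ T_nonneg T_incr NEP NBS dem f True]
      NBS_sum_le_sys_cost_equal_demands[OF _ T_nonneg T_incr T_C1 NEP NBS dem f True]
    by auto
next
  case False
  then obtain l where "l < L" "c l \<le> link_flow N f l" by (auto simp: not_less)
  then show ?thesis
    using sum_user_cost_infinite[OF f _ _ _ T_nonneg] cap_pos by simp
qed

lemma weighted_sum_le_ratio_weighted_sum:
  fixes x y :: "nat \<Rightarrow> ereal"
  assumes "N \<noteq> 0" and \<alpha>: "\<forall>i<N. 0 < \<alpha> i"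
    and x: "\<forall>i<N. 0 \<le> x i" and y: "\<forall>i<N. 0 \<le> y i"
    and sum_le: "(\<Sum>i<N. x i) \<le> (\<Sum>i<N. y i)"
  shows "(\<Sum>i<N. ereal (\<alpha> i) * x i)
      \<le> ereal (Max (\<alpha> ` {..<N}) / Min (\<alpha> ` {..<N})) * (\<Sum>i<N. ereal (\<alpha> i) * y i)"
proof -
  define M where "M = Max (\<alpha> ` {..<N})"
  define m where "m = Min (\<alpha> ` {..<N})"
  have m: "0 < m" "\<forall>i<N. m \<le> \<alpha> i" and M: "\<forall>i<N. \<alpha> i \<le> M"
    using assms(1) \<alpha> by (auto simp: m_def M_def lessThan_empty_iff)
  then have "0 < M" using assms(1) by (meson neq0_conv order.strict_trans2)
  have "(\<Sum>i<N. ereal (\<alpha> i) * x i) \<le> (\<Sum>i<N. ereal M * x i)"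
    using M x by (intro sum_mono ereal_mult_right_mono) auto
  also have "\<dots> = ereal M * (\<Sum>i<N. x i)"
    using x by (subst sum_ereal_right_distrib) auto
  also have "\<dots> \<le> ereal M * (\<Sum>i<N. y i)"
    using sum_le \<open>0 < M\<close> by (intro ereal_mult_left_mono) auto
  also have "\<dots> = ereal (M / m) * (ereal m * (\<Sum>i<N. y i))"
    using m by (simp add: mult.assoc[symmetric])
  also have "\<dots> \<le> ereal (M / m) * (\<Sum>i<N. ereal (\<alpha> i) * y i)"
  proof (rule ereal_mult_left_mono)
    show "ereal m * (\<Sum>i<N. y i) \<le> (\<Sum>i<N. ereal (\<alpha> i) * y i)"
      using m y by (subst sum_ereal_right_distrib) (auto intro!: sum_mono ereal_mult_right_mono)
    show "0 \<le> ereal (M / m)" using m \<open>0 < M\<close> by simp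
  qed
  finally show ?thesis by (simp add: M_def m_def)
qed

lemma ereal_divide_INF_le:
  fixes a :: ereal and S :: "'a \<Rightarrow> ereal"
  assumes "0 \<le> a" "\<forall>x\<in>X. 0 \<le> S x" "0 < k" "\<forall>x\<in>X. a \<le> ereal k * S x"
  shows "a / (INF x\<in>X. S x) \<le> ereal k"
proof -
  define I where "I = (INF x\<in>X. S x)"
  have "a / ereal k \<le> S x" if "x \<in> X" for x
    using assms that by (simp add: ereal_divide_le_pos)
  then have "a / ereal k \<le> I"
    unfolding I_def by (rule INF_greatest)
  then have a_le: "a \<le> ereal k * I"
    using assms(3) by (simp add: ereal_divide_le_pos)
  have "0 \<le> I" unfolding I_def using assms(2) by (auto intro: INF_greatest)
  then consider "I = 0" | "I = \<infinity>" | "0 < I" "I < \<infinity>" by force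
  then have "a / I \<le> ereal k"
  proof cases
    case 1
    then show ?thesis using a_le assms(1,3) by simp
  next
    case 2
    then show ?thesis using a_le assms(1,3) by (cases a) auto
  next
    case 3
    then show ?thesis using a_le by (simp add: ereal_divide_le_pos mult.commute)
  qed
  then show ?thesis by (simp add: I_def)
qed

theorem corollary3p1:
  fixes N L :: nat and r c \<alpha> :: "nat \<Rightarrow> real" and T :: "real \<Rightarrow> real"
    and fhat :: "nat \<Rightarrow> nat \<Rightarrow> real" and gt :: "nat \<Rightarrow> ereal"
  assumes N_pos: "1 \<le> N"
    and cap_pos: "\<forall>l<L. 0 < c l"
    and dem_pos: "\<forall>i<N. 0 < r i"
    and total: "(\<Sum>i<N. r i) < (\<Sum>l<L. c l)"
    and T_nonneg: "\<forall>l<L. \<forall>x\<in>{0..<c l}. 0 \<le> T (c l - x)"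
    and T_incr: "\<forall>l<L. strict_mono_on {0..<c l} (\<lambda>x. T (c l - x))"
    and T_convex: "\<forall>l<L. convex_on {0..<c l} (\<lambda>x. T (c l - x))"
    and T_C1: "\<forall>l<L. C1_on {0..<c l} (\<lambda>x. T (c l - x))"
    and case_split: "N = 2 \<or> (\<forall>i<N. r i = (\<Sum>j<N. r j) / real N)"
    and alpha_pos: "\<forall>i<N. 0 < \<alpha> i"
    and alpha_sum: "(\<Sum>i<N. \<alpha> i) = 1"
    and NEP: "is_NEP N L T c r fhat"
    and NBS: "is_NBS N L T c r (\<lambda>i. user_cost N L T c i fhat) gt"
  shows "PoS N L T c r \<alpha> gt \<le> ereal (Max (\<alpha> ` {..<N}) / Min (\<alpha> ` {..<N}))"
proof -
  have N: "N \<noteq> 0" using N_pos by simp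
  have gt_nonneg: "\<forall>i<N. 0 \<le> gt i"
    using NBS bargain_set_nonneg[OF _ _ T_nonneg] by (auto simp: is_NBS_def)
  have costs_nonneg: "\<forall>i<N. 0 \<le> user_cost N L T c i f" if "f \<in> feasible N L r" for f
    using user_cost_nonneg[OF that _ T_nonneg] by blast
  show ?thesis
    unfolding PoS_def
  proof (rule ereal_divide_INF_le)
    show "0 \<le> (\<Sum>i<N. ereal (\<alpha> i) * gt i)"
      using gt_nonneg alpha_pos by (auto intro!: sum_nonneg)
    show "\<forall>f\<in>feasible N L r. 0 \<le> sys_cost N L T c \<alpha> f"
      using costs_nonneg alpha_pos by (auto simp: sys_cost_def intro!: sum_nonneg)
    have "0 < Min (\<alpha> ` {..<N})" "Min (\<alpha> ` {..<N}) \<le> Max (\<alpha> ` {..<N})"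
      using N alpha_pos by (auto simp: lessThan_empty_iff intro: order_trans[OF Min_le Max_ge])
    then show "0 < Max (\<alpha> ` {..<N}) / Min (\<alpha> ` {..<N})"
      by simp
    show "\<forall>f\<in>feasible N L r. (\<Sum>i<N. ereal (\<alpha> i) * gt i)
        \<le> ereal (Max (\<alpha> ` {..<N}) / Min (\<alpha> ` {..<N})) * sys_cost N L T c \<alpha> f"
      unfolding sys_cost_def using N alpha_pos gt_nonneg costs_nonneg
        NBS_sum_le_sum_user_cost[OF cap_pos T_nonneg T_incr T_C1 case_split NEP NBS dem_pos]
      by (auto intro!: weighted_sum_le_ratio_weighted_sum)
  qed
qed

end
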